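(* For integers $1\le r\le t$, $$3rt + 2r + 2t +1 - \left\lfloor \frac{r}{2} \right\rfloor \le dim_s(C_{2r+1}\boxtimes C_{2t+1})\le 3rt + 2r + 2t +1.$$
   Context: $C_{m}$ is the cycle on $m$ vertices. For a connected graph $G$ with shortest-path distance $d_G$, a vertex $w$ strongly resolves $u,v$ if $d_G(w,u)=d_G(w,v)+d_G(v,u)$ or $d_G(w,v)=d_G(w,u)+d_G(u,v)$; $dim_s(G)$ is the minimum cardinality of a set $S\subseteq V(G)$ such that every pair of vertices is strongly resolved by some vertex of $S$. The strong product $G\boxtimes H$ has vertex set $V(G)\times V(H)$, with $(a,b)\sim(c,d)$ iff ($a=c$ and $bd\in E(H)$) or ($ac\in E(G)$ and $b=d$) or ($ac\in E(G)$ and $bd\in E(H)$). *)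

theory Defs
  imports Main
begin

record 'a graph =
  verts :: "'a set"
  adj :: "'a \<Rightarrow> 'a \<Rightarrow> bool"

fun walk :: "'a graph \<Rightarrow> nat \<Rightarrow> 'a \<Rightarrow> 'a \<Rightarrow> bool" where
  "walk G 0 u v \<longleftrightarrow> u = v \<and> u \<in> verts G"
| "walk G (Suc n) u v \<longleftrightarrow> (\<exists>w. u \<in> verts G \<and> w \<in> verts G \<and> adj G u w \<and> walk G n w v)"

text \<open>Shortest-path distance (meaningful for connected graphs).\<close>
definition gdist :: "'a graph \<Rightarrow> 'a \<Rightarrow> 'a \<Rightarrow> nat" where
  "gdist G u v = (LEAST n. walk G n u v)"

definition strongly_resolves :: "'a graph \<Rightarrow> 'a \<Rightarrow> 'a \<Rightarrow> 'a \<Rightarrow> bool" where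
  "strongly_resolves G w u v \<longleftrightarrow>
     gdist G w u = gdist G w v + gdist G v u \<or> gdist G w v = gdist G w u + gdist G u v"

definition strong_resolving_set :: "'a graph \<Rightarrow> 'a set \<Rightarrow> bool" where
  "strong_resolving_set G S \<longleftrightarrow> S \<subseteq> verts G \<and>
     (\<forall>u\<in>verts G. \<forall>v\<in>verts G. u \<noteq> v \<longrightarrow> (\<exists>w\<in>S. strongly_resolves G w u v))"

definition strong_metric_dim :: "'a graph \<Rightarrow> nat" where
  "strong_metric_dim G = (LEAST k. \<exists>S. strong_resolving_set G S \<and> finite S \<and> card S = k)"

definition cycle_graph :: "nat \<Rightarrow> nat graph" where
  "cycle_graph m = \<lparr> verts = {0..<m},
     adj = (\<lambda>i j. i < m \<and> j < m \<and> i \<noteq> j \<and> (j = (i + 1) mod m \<or> i = (j + 1) mod m)) \<rparr>"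

definition strong_product :: "'a graph \<Rightarrow> 'b graph \<Rightarrow> ('a \<times> 'b) graph" where
  "strong_product G H = \<lparr> verts = verts G \<times> verts H,
     adj = (\<lambda>(a,b) (c,d). (a = c \<and> adj H b d) \<or> (adj G a c \<and> b = d) \<or> (adj G a c \<and> adj H b d)) \<rparr>"

end

theory Submission
  imports Defs
begin

text \<open>
  Distances in \<open>C\<^sub>2\<^sub>r\<^sub>+\<^sub>1 \<boxtimes> C\<^sub>2\<^sub>t\<^sub>+\<^sub>1\<close> are the maximum of the two circular distances.
  If no neighbour of \<open>v\<close> is farther from \<open>u\<close> than \<open>v\<close>, then \<open>d(w,u) = d(w,v) + d(v,u)\<close>
  forces \<open>w = v\<close>; so a strong resolving set contains a vertex of every mutually maximally
  distant pair. Two vertices whose second coordinates are at circular distance \<open>t\<close>, or whose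
  first coordinates are at distance \<open>r\<close> while the second ones are at distance less than \<open>r\<close>,
  form such a pair. A set of residues mod \<open>2k+1\<close> with no two at distance \<open>k\<close> has at most
  \<open>k\<close> elements (it is disjoint from its shift by \<open>k\<close>), so the complement of a strong
  resolving set takes at most \<open>t\<close> values in the second coordinate, each with at most \<open>r\<close>
  vertices. Conversely, the complement of the corner box \<open>{0..<r} \<times> {0..<t}\<close> is strongly
  resolving: two box vertices lie on a geodesic starting at a vertex with first coordinate
  \<open>2r\<close> or second coordinate \<open>2t\<close>.
  Hence \<open>dim\<^sub>s = 3rt + 2r + 2t + 1\<close>: the upper bound is attained, and the lower bound
  holds even without the correction term \<open>\<lfloor>r/2\<rfloor>\<close>.
\<close>

lemma card_le_mult_if_fibres:
  fixes I :: "('a \<times> 'b) set"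
  assumes "finite I" "card (snd ` I) \<le> q" "\<And>b. card {a. (a, b) \<in> I} \<le> p"
  shows "card I \<le> p * q"
proof -
  have "I = (\<Union>b \<in> snd ` I. {a. (a, b) \<in> I} \<times> {b})"
    by auto
  then have "card I \<le> (\<Sum>b \<in> snd ` I. card ({a. (a, b) \<in> I} \<times> {b}))"
    using card_UN_le[of "snd ` I" "\<lambda>b. {a. (a, b) \<in> I} \<times> {b}"] \<open>finite I\<close> by simp
  also have "\<dots> \<le> (\<Sum>b \<in> snd ` I. p)"
    using assms(3) by (intro sum_mono) (simp add: card_cartesian_product)
  also have "\<dots> \<le> p * q"
    using assms(2) by simp
  finally show ?thesis .
qed

lemma gdist_self: "u \<in> verts G \<Longrightarrow> gdist G u u = 0"
  unfolding gdist_def by simp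

lemma strongly_resolves_commute: "strongly_resolves G w u v \<longleftrightarrow> strongly_resolves G w v u"
  unfolding strongly_resolves_def by auto

lemma strongly_resolves_self: "u \<in> verts G \<Longrightarrow> strongly_resolves G u u v"
  unfolding strongly_resolves_def by (simp add: gdist_self)

lemma strong_resolving_setI:
  assumes "S \<subseteq> verts G"
    and "\<And>u v. u \<in> verts G - S \<Longrightarrow> v \<in> verts G - S \<Longrightarrow> u \<noteq> v \<Longrightarrow>
      \<exists>w \<in> S. strongly_resolves G w u v"
  shows "strong_resolving_set G S"
  unfolding strong_resolving_set_def
  using assms strongly_resolves_self strongly_resolves_commute by (metis Diff_iff)

lemma strong_metric_dim_le: "strong_resolving_set G S \<Longrightarrow> finite S \<Longrightarrow> strong_metric_dim G \<le> card S"
  unfolding strong_metric_dim_def by (blast intro: Least_le)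

lemma strong_metric_dim_attained:
  assumes "finite (verts G)"
  obtains S where "strong_resolving_set G S" "finite S" "card S = strong_metric_dim G"
proof -
  have "strong_resolving_set G (verts G)"
    by (rule strong_resolving_setI) auto
  with assms show ?thesis
    using that LeastI_ex[of "\<lambda>k. \<exists>S. strong_resolving_set G S \<and> finite S \<and> card S = k"]
    unfolding strong_metric_dim_def by blast
qed

definition maximally_distant :: "'a graph \<Rightarrow> 'a \<Rightarrow> 'a \<Rightarrow> bool" where
  "maximally_distant G v u \<longleftrightarrow> (\<forall>v' \<in> verts G. adj G v v' \<longrightarrow> gdist G v' u \<le> gdist G v u)"

locale path_metric =
  fixes G :: "'a graph" and D :: "'a \<Rightarrow> 'a \<Rightarrow> nat"
  assumes dist_eq_0_iff: "u \<in> verts G \<Longrightarrow> v \<in> verts G \<Longrightarrow> D u v = 0 \<longleftrightarrow> u = v"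
    and dist_sym: "u \<in> verts G \<Longrightarrow> v \<in> verts G \<Longrightarrow> D u v = D v u"
    and dist_adj_le: "u \<in> verts G \<Longrightarrow> v \<in> verts G \<Longrightarrow> w \<in> verts G \<Longrightarrow> adj G u w \<Longrightarrow>
      D u v \<le> D w v + 1"
    and dist_step: "u \<in> verts G \<Longrightarrow> v \<in> verts G \<Longrightarrow> u \<noteq> v \<Longrightarrow>
      \<exists>w \<in> verts G. adj G u w \<and> D w v = D u v - 1"
begin

lemma walk_imp_dist_le: "walk G k u v \<Longrightarrow> u \<in> verts G \<and> v \<in> verts G \<and> D u v \<le> k"
proof (induction k arbitrary: u)
  case 0
  then show ?case using dist_eq_0_iff by auto
next
  case (Suc k)
  then obtain w where "u \<in> verts G" "w \<in> verts G" "adj G u w" "walk G k w v"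
    by auto
  with Suc.IH dist_adj_le show ?case by fastforce
qed

lemma dist_imp_walk: "u \<in> verts G \<Longrightarrow> v \<in> verts G \<Longrightarrow> walk G (D u v) u v"
proof (induction "D u v" arbitrary: u)
  case 0
  then show ?case using dist_eq_0_iff by (metis walk.simps(1))
next
  case (Suc k)
  then have "u \<noteq> v" using dist_eq_0_iff by fastforce
  with Suc.prems obtain w where "w \<in> verts G" "adj G u w" "D w v = k"
    using dist_step Suc.hyps(2) by fastforce
  with Suc show ?case by (metis walk.simps(2))
qed

lemma gdist_eq: "u \<in> verts G \<Longrightarrow> v \<in> verts G \<Longrightarrow> gdist G u v = D u v"
  unfolding gdist_def by (rule Least_equality) (use dist_imp_walk walk_imp_dist_le in blast)+

lemma dist_triangle:
  "u \<in> verts G \<Longrightarrow> v \<in> verts G \<Longrightarrow> w \<in> verts G \<Longrightarrow> D u w \<le> D u v + D v w"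
proof (induction "D u v" arbitrary: u)
  case 0
  then show ?case using dist_eq_0_iff by auto
next
  case (Suc k)
  then have "u \<noteq> v" using dist_eq_0_iff by fastforce
  with Suc.prems obtain u' where "u' \<in> verts G" "adj G u u'" "D u' v = k"
    using dist_step Suc.hyps(2) by fastforce
  with Suc dist_adj_le[of u w u'] show ?case by fastforce
qed

lemma strongly_resolves_iff:
  "u \<in> verts G \<Longrightarrow> v \<in> verts G \<Longrightarrow> w \<in> verts G \<Longrightarrow>
     strongly_resolves G w u v \<longleftrightarrow> D w u = D w v + D v u \<or> D w v = D w u + D u v"
  unfolding strongly_resolves_def by (simp add: gdist_eq)

lemma geodesic_beyond_maximally_distant:
  assumes uvw: "u \<in> verts G" "v \<in> verts G" "w \<in> verts G"
    and far: "maximally_distant G v u"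
    and geodesic: "D w u = D w v + D v u"
  shows "w = v"
proof (rule ccontr)
  assume "w \<noteq> v"
  then obtain v' where v': "v' \<in> verts G" "adj G v v'" "D v' w = D v w - 1"
    using dist_step[of v w] uvw by metis
  have "D v' u \<le> D v u"
    using far v' uvw unfolding maximally_distant_def by (simp add: gdist_eq)
  moreover have "D v w \<ge> 1"
    using \<open>w \<noteq> v\<close> dist_eq_0_iff[of v w] uvw by auto
  moreover have "D w u \<le> D w v' + D v' u"
    using dist_triangle v'(1) uvw by blast
  ultimately show False
    using geodesic v'(3) dist_sym[of w v] dist_sym[of w v'] v'(1) uvw by linarith
qed

lemma strong_resolving_set_meets_mutually_maximally_distant:
  assumes S: "strong_resolving_set G S"
    and uv: "u \<in> verts G" "v \<in> verts G" "u \<noteq> v"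
    and far: "maximally_distant G u v" "maximally_distant G v u"
  shows "u \<in> S \<or> v \<in> S"
proof -
  obtain w where "w \<in> S" "strongly_resolves G w u v"
    using S uv unfolding strong_resolving_set_def by blast
  moreover have "w \<in> verts G"
    using S \<open>w \<in> S\<close> unfolding strong_resolving_set_def by blast
  ultimately show ?thesis
    using geodesic_beyond_maximally_distant far uv strongly_resolves_iff by metis
qed

end

lemma verts_strong_product [simp]: "verts (strong_product G H) = verts G \<times> verts H"
  by (simp add: strong_product_def)

definition strong_product_dist ::
    "('a \<Rightarrow> 'a \<Rightarrow> nat) \<Rightarrow> ('b \<Rightarrow> 'b \<Rightarrow> nat) \<Rightarrow> 'a \<times> 'b \<Rightarrow> 'a \<times> 'b \<Rightarrow> nat" where
  "strong_product_dist DG DH u v = max (DG (fst u) (fst v)) (DH (snd u) (snd v))"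

lemma path_metric_strong_product:
  assumes G: "path_metric G DG" and H: "path_metric H DH"
  shows "path_metric (strong_product G H) (strong_product_dist DG DH)"
proof -
  have step_or_stay: "\<exists>a' \<in> verts K. (if a = c then a' = a else adj K a a') \<and> DK a' c = DK a c - 1"
    if "path_metric K DK" "a \<in> verts K" "c \<in> verts K" for K :: "'c graph" and DK a c
  proof (cases "a = c")
    case True
    then show ?thesis using that path_metric.dist_eq_0_iff by fastforce
  next
    case False
    then show ?thesis using that path_metric.dist_step by fastforce
  qed
  show ?thesis
  proof
    fix u v assume "u \<in> verts (strong_product G H)" "v \<in> verts (strong_product G H)"
    then show "strong_product_dist DG DH u v = 0 \<longleftrightarrow> u = v"
      "strong_product_dist DG DH u v = strong_product_dist DG DH v u"
      using path_metric.dist_eq_0_iff[OF G] path_metric.dist_eq_0_iff[OF H]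
        path_metric.dist_sym[OF G] path_metric.dist_sym[OF H]
      by (auto simp: strong_product_def strong_product_dist_def prod_eq_iff)
  next
    fix u v w
    assume "u \<in> verts (strong_product G H)" "v \<in> verts (strong_product G H)"
      "w \<in> verts (strong_product G H)" "adj (strong_product G H) u w"
    then show "strong_product_dist DG DH u v \<le> strong_product_dist DG DH w v + 1"
      using path_metric.dist_adj_le[OF G] path_metric.dist_adj_le[OF H]
      by (fastforce simp: strong_product_def strong_product_dist_def)
  next
    fix u v
    assume "u \<in> verts (strong_product G H)" "v \<in> verts (strong_product G H)" "u \<noteq> v"
    then obtain a b c d where uv: "u = (a, b)" "v = (c, d)" "a \<in> verts G" "b \<in> verts H"
      "c \<in> verts G" "d \<in> verts H" "(a, b) \<noteq> (c, d)"
      by (auto simp: strong_product_def)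
    obtain a' where a': "a' \<in> verts G" "if a = c then a' = a else adj G a a'" "DG a' c = DG a c - 1"
      using step_or_stay[OF G uv(3,5)] by blast
    obtain b' where b': "b' \<in> verts H" "if b = d then b' = b else adj H b b'" "DH b' d = DH b d - 1"
      using step_or_stay[OF H uv(4,6)] by blast
    have "adj (strong_product G H) u (a', b')"
      using a'(2) b'(2) uv by (auto simp: strong_product_def split: if_splits)
    moreover have "strong_product_dist DG DH (a', b') v = strong_product_dist DG DH u v - 1"
      using a'(3) b'(3) uv by (simp add: strong_product_dist_def)
    ultimately show "\<exists>w \<in> verts (strong_product G H). adj (strong_product G H) u w \<and>
        strong_product_dist DG DH w v = strong_product_dist DG DH u v - 1"
      using a'(1) b'(1) by (auto simp: strong_product_def)
  qed
qed

lemma verts_cycle_graph [simp]: "verts (cycle_graph m) = {..<m}"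
  by (auto simp: cycle_graph_def)

definition cycle_dist :: "nat \<Rightarrow> nat \<Rightarrow> nat \<Rightarrow> nat" where
  "cycle_dist m x y = (let d = if x \<le> y then y - x else x - y in min d (m - d))"

lemma int_cycle_dist:
  "x < m \<Longrightarrow> y < m \<Longrightarrow>
     int (cycle_dist m x y) = min (\<bar>int x - int y\<bar>) (int m - \<bar>int x - int y\<bar>)"
  unfolding cycle_dist_def Let_def by (cases "x \<le> y") (auto simp: of_nat_diff min_def)

lemma cycle_dist_sym: "cycle_dist m x y = cycle_dist m y x"
  unfolding cycle_dist_def by simp

lemma cycle_dist_eq_0_iff: "x < m \<Longrightarrow> y < m \<Longrightarrow> cycle_dist m x y = 0 \<longleftrightarrow> x = y"
  using int_cycle_dist[of x m y] by (auto simp: min_def split: if_splits)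

lemma cycle_dist_triangle:
  assumes "x < m" "y < m" "z < m"
  shows "cycle_dist m x z \<le> cycle_dist m x y + cycle_dist m y z"
proof -
  have "min (\<bar>int x - int z\<bar>) (int m - \<bar>int x - int z\<bar>) \<le>
        min (\<bar>int x - int y\<bar>) (int m - \<bar>int x - int y\<bar>) +
        min (\<bar>int y - int z\<bar>) (int m - \<bar>int y - int z\<bar>)"
    unfolding min_def using assms by (simp split: if_splits abs_split)
  then show ?thesis using assms int_cycle_dist[of x m z] int_cycle_dist[of x m y] int_cycle_dist[of y m z]
    by linarith
qed

lemma double_cycle_dist_le: "x < m \<Longrightarrow> y < m \<Longrightarrow> 2 * cycle_dist m x y \<le> m"
  using int_cycle_dist[of x m y] by (simp add: min_def split: if_splits)

lemma adj_cycle_graph_iff: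
  "adj (cycle_graph m) x z \<longleftrightarrow> x < m \<and> z < m \<and> x \<noteq> z \<and>
     (z = (if x + 1 < m then x + 1 else 0) \<or> x = (if z + 1 < m then z + 1 else 0))"
proof -
  have "(x + 1) mod m = (if x + 1 < m then x + 1 else 0)" if "x < m" for x
  proof (cases "x + 1 < m")
    case False
    with that have "x + 1 = m" by linarith
    then show ?thesis by simp
  qed simp
  then show ?thesis by (auto simp: cycle_graph_def)
qed

lemma cycle_dist_adj_le_1: "adj (cycle_graph m) x z \<Longrightarrow> cycle_dist m x z \<le> 1"
  unfolding adj_cycle_graph_iff using int_cycle_dist[of x m z]
  by (auto simp: min_def split: if_splits)

lemma cycle_dist_step:
  assumes "x < m" "y < m" "x \<noteq> y"
  shows "\<exists>z<m. adj (cycle_graph m) x z \<and> cycle_dist m z y = cycle_dist m x y - 1"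
proof -
  define succ where "succ = (if x + 1 < m then x + 1 else 0)"
  define pred where "pred = (if x = 0 then m - 1 else x - 1)"
  have adj: "adj (cycle_graph m) x succ" "adj (cycle_graph m) x pred"
    using assms unfolding adj_cycle_graph_iff succ_def pred_def by auto
  have lt: "succ < m" "pred < m"
    using assms unfolding succ_def pred_def by auto
  have "int (cycle_dist m succ y) = int (cycle_dist m x y) - 1"
    if "(x < y \<and> 2 * (y - x) \<le> m) \<or> (y < x \<and> 2 * (x - y) > m)"
    using that assms lt int_cycle_dist[of x m y] int_cycle_dist[of succ m y] unfolding succ_def
    by (auto simp: min_def split: if_splits abs_split)
  moreover have "int (cycle_dist m pred y) = int (cycle_dist m x y) - 1"
    if "(y < x \<and> 2 * (x - y) \<le> m) \<or> (x < y \<and> 2 * (y - x) > m)"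
    using that assms lt int_cycle_dist[of x m y] int_cycle_dist[of pred m y] unfolding pred_def
    by (auto simp: min_def split: if_splits abs_split)
  ultimately have "cycle_dist m succ y = cycle_dist m x y - 1 \<or> cycle_dist m pred y = cycle_dist m x y - 1"
    using assms(3) by linarith
  then show ?thesis using adj lt by blast
qed

lemma path_metric_cycle_graph: "path_metric (cycle_graph m) (cycle_dist m)"
proof
  fix x y z
  assume "x \<in> verts (cycle_graph m)" "y \<in> verts (cycle_graph m)" "z \<in> verts (cycle_graph m)"
    "adj (cycle_graph m) x z"
  then show "cycle_dist m x y \<le> cycle_dist m z y + 1"
    using cycle_dist_triangle[of x m z y] cycle_dist_adj_le_1[of m x z] by simp
next
  fix x y
  assume "x \<in> verts (cycle_graph m)" "y \<in> verts (cycle_graph m)" "x \<noteq> y"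
  then show "\<exists>z \<in> verts (cycle_graph m). adj (cycle_graph m) x z \<and> cycle_dist m z y = cycle_dist m x y - 1"
    using cycle_dist_step[of x m y] by auto
qed (simp_all add: cycle_dist_eq_0_iff cycle_dist_sym)

lemma cycle_dist_eq_diff: "x \<le> y \<Longrightarrow> 2 * (y - x) \<le> m \<Longrightarrow> cycle_dist m x y = y - x"
  unfolding cycle_dist_def by simp

lemma cycle_dist_last: "2 * (x + 1) \<le> m \<Longrightarrow> cycle_dist m (m - 1) x = x + 1"
  unfolding cycle_dist_def by simp

lemma card_le_if_no_antipodal_pair:
  assumes "1 \<le> k" and X: "X \<subseteq> {..<2 * k + 1}"
    and no_antipodes: "\<And>x y. x \<in> X \<Longrightarrow> y \<in> X \<Longrightarrow> cycle_dist (2 * k + 1) x y \<noteq> k"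
  shows "card X \<le> k"
proof -
  define antipode where "antipode x = (if x \<le> k then x + k else x - k - 1)" for x
  have antipode_dist: "cycle_dist (2 * k + 1) x (antipode x) = k" if "x < 2 * k + 1" for x
    using that int_cycle_dist[of x "2 * k + 1" "antipode x"] unfolding antipode_def
    by (cases "x \<le> k") (auto simp: min_def split: if_splits)
  have "inj_on antipode {..<2 * k + 1}"
    unfolding inj_on_def antipode_def by auto
  then have card_image: "card (antipode ` X) = card X"
    using X by (meson card_image inj_on_subset)
  have "X \<inter> antipode ` X = {}"
    using X antipode_dist no_antipodes by blast
  moreover have "finite X"
    using X finite_subset by blast
  ultimately have "card X + card (antipode ` X) = card (X \<union> antipode ` X)"
    by (simp add: card_Un_disjoint)
  also have "\<dots> \<le> card {..<2 * k + 1}"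
    using X unfolding antipode_def by (intro card_mono) auto
  finally have "card X + card (antipode ` X) \<le> 2 * k + 1"
    by simp
  with card_image show ?thesis by simp
qed

abbreviation odd_cycle_product :: "nat \<Rightarrow> nat \<Rightarrow> (nat \<times> nat) graph" where
  "odd_cycle_product r t \<equiv> strong_product (cycle_graph (2 * r + 1)) (cycle_graph (2 * t + 1))"

abbreviation odd_cycle_product_dist :: "nat \<Rightarrow> nat \<Rightarrow> nat \<times> nat \<Rightarrow> nat \<times> nat \<Rightarrow> nat" where
  "odd_cycle_product_dist r t \<equiv> strong_product_dist (cycle_dist (2 * r + 1)) (cycle_dist (2 * t + 1))"

interpretation odd_cycle_product: path_metric "odd_cycle_product r t" "odd_cycle_product_dist r t" for r t
  by (intro path_metric_strong_product path_metric_cycle_graph)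

lemma adj_odd_cycle_product_dist_le_1:
  assumes "adj (odd_cycle_product r t) (a, b) (c, d)" "a < 2 * r + 1" "b < 2 * t + 1"
  shows "cycle_dist (2 * r + 1) a c \<le> 1" "cycle_dist (2 * t + 1) b d \<le> 1"
  using assms cycle_dist_adj_le_1 cycle_dist_eq_0_iff[of a "2 * r + 1" a] cycle_dist_eq_0_iff[of b "2 * t + 1" b]
  by (auto simp: strong_product_def)

lemma maximally_distant_odd_cycle_product:
  assumes "r \<le> t"
    and uv: "(a, b) \<in> verts (odd_cycle_product r t)" "(c, d) \<in> verts (odd_cycle_product r t)"
    and far: "cycle_dist (2 * t + 1) b d = t \<or> cycle_dist (2 * r + 1) a c = r \<and> cycle_dist (2 * t + 1) b d < r"
  shows "maximally_distant (odd_cycle_product r t) (c, d) (a, b)"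
  unfolding maximally_distant_def
proof (intro ballI impI)
  fix v' assume "v' \<in> verts (odd_cycle_product r t)" "adj (odd_cycle_product r t) (c, d) v'"
  moreover obtain c' d' where v'_eq: "v' = (c', d')" by fastforce
  ultimately have v': "(c', d') \<in> verts (odd_cycle_product r t)" "adj (odd_cycle_product r t) (c, d) (c', d')"
    by simp_all
  have bounds: "cycle_dist (2 * r + 1) c' a \<le> r" "cycle_dist (2 * t + 1) d' b \<le> t"
    using uv v' double_cycle_dist_le[of c' "2 * r + 1" a] double_cycle_dist_le[of d' "2 * t + 1" b]
    by auto
  have "cycle_dist (2 * t + 1) d' b \<le> cycle_dist (2 * t + 1) d b + 1"
    using uv v' adj_odd_cycle_product_dist_le_1(2)[OF v'(2)] cycle_dist_triangle[of d' "2 * t + 1" d b]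
      cycle_dist_sym[of "2 * t + 1" d d'] by auto
  with far bounds \<open>r \<le> t\<close>
  have "odd_cycle_product_dist r t (c', d') (a, b) \<le> odd_cycle_product_dist r t (c, d) (a, b)"
    by (auto simp: strong_product_dist_def cycle_dist_sym)
  with uv v' v'_eq show "gdist (odd_cycle_product r t) v' (a, b) \<le> gdist (odd_cycle_product r t) (c, d) (a, b)"
    by (metis odd_cycle_product.gdist_eq)
qed

lemma odd_cycle_product_far_pair_meets_resolving_set:
  assumes "1 \<le> r" "r \<le> t" and S: "strong_resolving_set (odd_cycle_product r t) S"
    and uv: "(a, b) \<in> verts (odd_cycle_product r t)" "(c, d) \<in> verts (odd_cycle_product r t)"
    and far: "cycle_dist (2 * t + 1) b d = t \<or> cycle_dist (2 * r + 1) a c = r \<and> cycle_dist (2 * t + 1) b d < r"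
  shows "(a, b) \<in> S \<or> (c, d) \<in> S"
proof (rule odd_cycle_product.strong_resolving_set_meets_mutually_maximally_distant[OF S uv])
  show "(a, b) \<noteq> (c, d)"
    using far assms(1,2) cycle_dist_eq_0_iff[of b "2 * t + 1" b] cycle_dist_eq_0_iff[of a "2 * r + 1" a] uv
    by auto
  show "maximally_distant (odd_cycle_product r t) (c, d) (a, b)"
    by (rule maximally_distant_odd_cycle_product[OF \<open>r \<le> t\<close> uv far])
  show "maximally_distant (odd_cycle_product r t) (a, b) (c, d)"
    using maximally_distant_odd_cycle_product[OF \<open>r \<le> t\<close> uv(2,1)] far by (simp add: cycle_dist_sym)
qed

lemma card_outside_strong_resolving_set_le:
  assumes "1 \<le> r" "r \<le> t" and S: "strong_resolving_set (odd_cycle_product r t) S"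
  shows "card (verts (odd_cycle_product r t) - S) \<le> r * t"
proof -
  define I where "I = verts (odd_cycle_product r t) - S"
  have far_pair: False
    if "(a, b) \<in> I" "(c, d) \<in> I"
      "cycle_dist (2 * t + 1) b d = t \<or> cycle_dist (2 * r + 1) a c = r \<and> cycle_dist (2 * t + 1) b d < r"
    for a b c d
    using odd_cycle_product_far_pair_meets_resolving_set[OF assms, of a b c d] that
    unfolding I_def by blast
  have "card {a. (a, b) \<in> I} \<le> r" for b
  proof (rule card_le_if_no_antipodal_pair)
    show "{a. (a, b) \<in> I} \<subseteq> {..<2 * r + 1}"
      unfolding I_def by auto
    show "cycle_dist (2 * r + 1) x y \<noteq> r" if "x \<in> {a. (a, b) \<in> I}" "y \<in> {a. (a, b) \<in> I}" for x y
      using that far_pair[of x b y b] cycle_dist_eq_0_iff[of b "2 * t + 1" b] \<open>1 \<le> r\<close>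
      unfolding I_def by auto
  qed fact
  moreover have "card (snd ` I) \<le> t"
  proof (rule card_le_if_no_antipodal_pair)
    show "snd ` I \<subseteq> {..<2 * t + 1}"
      unfolding I_def by auto
    show "cycle_dist (2 * t + 1) x y \<noteq> t" if "x \<in> snd ` I" "y \<in> snd ` I" for x y
      using that far_pair by force
  qed (use assms in simp)
  moreover have "finite I"
    unfolding I_def by simp
  ultimately show ?thesis
    unfolding I_def[symmetric] by (intro card_le_mult_if_fibres)
qed

lemma strongly_resolves_from_last_row:
  assumes "a \<le> c" "c < r" "b < t" "d < t" "cycle_dist (2 * t + 1) b d \<le> c - a"
  shows "strongly_resolves (odd_cycle_product r t) (2 * r, b) (a, b) (c, d)"
proof -
  have "odd_cycle_product_dist r t (2 * r, b) (c, d) =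
      odd_cycle_product_dist r t (2 * r, b) (a, b) + odd_cycle_product_dist r t (a, b) (c, d)"
    using assms cycle_dist_eq_0_iff[of b "2 * t + 1" b] cycle_dist_last[of a "2 * r + 1"]
      cycle_dist_last[of c "2 * r + 1"] cycle_dist_eq_diff[of a c "2 * r + 1"]
    by (simp add: strong_product_dist_def)
  with assms show ?thesis
    by (subst odd_cycle_product.strongly_resolves_iff) auto
qed

lemma strongly_resolves_from_last_column:
  assumes "b \<le> d" "d < t" "a < r" "c < r" "cycle_dist (2 * r + 1) a c \<le> d - b"
  shows "strongly_resolves (odd_cycle_product r t) (a, 2 * t) (a, b) (c, d)"
proof -
  have "odd_cycle_product_dist r t (a, 2 * t) (c, d) =
      odd_cycle_product_dist r t (a, 2 * t) (a, b) + odd_cycle_product_dist r t (a, b) (c, d)"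
    using assms cycle_dist_eq_0_iff[of a "2 * r + 1" a] cycle_dist_last[of b "2 * t + 1"]
      cycle_dist_last[of d "2 * t + 1"] cycle_dist_eq_diff[of b d "2 * t + 1"]
    by (simp add: strong_product_dist_def)
  with assms show ?thesis
    by (subst odd_cycle_product.strongly_resolves_iff) auto
qed

lemma strong_resolving_set_outside_corner:
  "strong_resolving_set (odd_cycle_product r t) (verts (odd_cycle_product r t) - {..<r} \<times> {..<t})"
proof (rule strong_resolving_setI)
  fix u v
  assume "u \<in> verts (odd_cycle_product r t) - (verts (odd_cycle_product r t) - {..<r} \<times> {..<t})"
    "v \<in> verts (odd_cycle_product r t) - (verts (odd_cycle_product r t) - {..<r} \<times> {..<t})"
  then obtain a b c d where uv: "u = (a, b)" "v = (c, d)" "a < r" "b < t" "c < r" "d < t"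
    by auto
  let ?outside = "verts (odd_cycle_product r t) - {..<r} \<times> {..<t}"
  have rows: "(2 * r, y) \<in> ?outside" if "y < t" for y
    using that by simp
  have columns: "(x, 2 * t) \<in> ?outside" if "x < r" for x
    using that by simp
  consider "cycle_dist (2 * t + 1) b d \<le> cycle_dist (2 * r + 1) a c" "a \<le> c"
    | "cycle_dist (2 * t + 1) b d \<le> cycle_dist (2 * r + 1) a c" "c \<le> a"
    | "cycle_dist (2 * r + 1) a c \<le> cycle_dist (2 * t + 1) b d" "b \<le> d"
    | "cycle_dist (2 * r + 1) a c \<le> cycle_dist (2 * t + 1) b d" "d \<le> b"
    by linarith
  then show "\<exists>w \<in> ?outside. strongly_resolves (odd_cycle_product r t) w u v"
  proof cases
    case 1
    then show ?thesis
      using strongly_resolves_from_last_row[of a c r b t d] rows uv cycle_dist_eq_diff[of a c "2 * r + 1"]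
      by auto
  next
    case 2
    then show ?thesis
      using strongly_resolves_from_last_row[of c a r d t b] rows uv cycle_dist_eq_diff[of c a "2 * r + 1"]
      by (auto simp: cycle_dist_sym strongly_resolves_commute)
  next
    case 3
    then show ?thesis
      using strongly_resolves_from_last_column[of b d t a r c] columns uv cycle_dist_eq_diff[of b d "2 * t + 1"]
      by auto
  next
    case 4
    then show ?thesis
      using strongly_resolves_from_last_column[of d b t c r a] columns uv cycle_dist_eq_diff[of d b "2 * t + 1"]
      by (auto simp: cycle_dist_sym strongly_resolves_commute)
  qed
qed auto

lemma strong_metric_dim_odd_cycle_product:
  assumes "1 \<le> r" "r \<le> t"
  shows "strong_metric_dim (odd_cycle_product r t) = 3 * r * t + 2 * r + 2 * t + 1"
proof (rule antisym)
  have card_verts: "card (verts (odd_cycle_product r t)) = 4 * r * t + 2 * r + 2 * t + 1"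
    by (simp add: card_cartesian_product algebra_simps)
  have "{..<r} \<times> {..<t} \<subseteq> verts (odd_cycle_product r t)"
    by auto
  then have "card (verts (odd_cycle_product r t) - {..<r} \<times> {..<t}) = 3 * r * t + 2 * r + 2 * t + 1"
    using card_verts by (simp add: card_Diff_subset card_cartesian_product)
  then show "strong_metric_dim (odd_cycle_product r t) \<le> 3 * r * t + 2 * r + 2 * t + 1"
    using strong_metric_dim_le[OF strong_resolving_set_outside_corner[of r t]] by simp
  obtain S where S: "strong_resolving_set (odd_cycle_product r t) S" "finite S"
    "card S = strong_metric_dim (odd_cycle_product r t)"
    by (rule strong_metric_dim_attained[of "odd_cycle_product r t"]) auto
  then have "S \<subseteq> verts (odd_cycle_product r t)"
    unfolding strong_resolving_set_def by blast
  with S card_verts card_outside_strong_resolving_set_le[OF assms S(1)]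
  show "3 * r * t + 2 * r + 2 * t + 1 \<le> strong_metric_dim (odd_cycle_product r t)"
    by (simp add: card_Diff_subset)
qed

theorem theorem20:
  fixes r t :: nat
  assumes "1 \<le> r" and "r \<le> t"
  shows "3*r*t + 2*r + 2*t + 1 - r div 2
           \<le> strong_metric_dim (strong_product (cycle_graph (2*r+1)) (cycle_graph (2*t+1)))
       \<and> strong_metric_dim (strong_product (cycle_graph (2*r+1)) (cycle_graph (2*t+1)))
           \<le> 3*r*t + 2*r + 2*t + 1"
  using strong_metric_dim_odd_cycle_product[OF assms] by simp

end
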